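(* Let $\mathbf A\in\mathbb R^{n\times p}$ with columns $\mathbf a_1,\dots,\mathbf a_p$, let $\mathbf y\in\mathbb R^n$, let $\mathbf w$ be a weight vector as in the context and $\Delta:=\min\{w_l-w_{l+1}: l=1,\dots,p-1\}$. Let $\widehat{\mathbf x}$ be any minimizer of $$\|\mathbf A\mathbf x-\mathbf y\|_1+\Omega_{\mathbf w}(\mathbf x)$$ over $\mathbf x\in\mathbb R^p$. Then for every pair of columns $(i,j)$ for which $\|\operatorname{sign}(\widehat x_i)\mathbf a_i-\operatorname{sign}(\widehat x_j)\mathbf a_j\|_1<\Delta$, we have $|\widehat x_i|=|\widehat x_j|$.
   Context: $\mathbf w=(w_1,\dots,w_p)\in\mathbb R^p_+$ satisfies $w_1\ge w_2\ge\cdots\ge w_p\ge0$ and $w_1>0$. The ordered weighted $\ell_1$ (OWL) norm is $\Omega_{\mathbf w}(\mathbf x)=\sum_{i=1}^p w_i|x|_{[i]}$, where $|x|_{[i]}$ denotes the $i$-th largest component of $\mathbf x$ in magnitude. $\operatorname{sign}$ denotes the sign function. *)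

theory Defs
  imports Complex_Main
begin

text \<open>Vectors in R^p are represented as functions nat => real, with only the
  indices 0..p-1 relevant; matrices in R^{n x p} as nat => nat => real
  (entry A r k, row r < n, column k < p). Indices are 0-based.\<close>

definition l1norm :: "nat \<Rightarrow> (nat \<Rightarrow> real) \<Rightarrow> real" where
  "l1norm n v = (\<Sum>r<n. \<bar>v r\<bar>)"

definition matvec :: "nat \<Rightarrow> (nat \<Rightarrow> nat \<Rightarrow> real) \<Rightarrow> (nat \<Rightarrow> real) \<Rightarrow> (nat \<Rightarrow> real)" where
  "matvec p A x = (\<lambda>r. \<Sum>k<p. A r k * x k)"

text \<open>i-th largest magnitude (0-based): |x|_[i+1] in the paper's notation.\<close>
definition sorted_mag :: "nat \<Rightarrow> (nat \<Rightarrow> real) \<Rightarrow> nat \<Rightarrow> real" where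
  "sorted_mag p x i = rev (sort (map (\<lambda>k. \<bar>x k\<bar>) [0..<p])) ! i"

definition owl :: "nat \<Rightarrow> (nat \<Rightarrow> real) \<Rightarrow> (nat \<Rightarrow> real) \<Rightarrow> real" where
  "owl p w x = (\<Sum>i<p. w i * sorted_mag p x i)"

definition owl_weight :: "nat \<Rightarrow> (nat \<Rightarrow> real) \<Rightarrow> bool" where
  "owl_weight p w \<longleftrightarrow> 0 < p \<and> (\<forall>i j. i \<le> j \<longrightarrow> j < p \<longrightarrow> w j \<le> w i)
      \<and> 0 \<le> w (p - 1) \<and> 0 < w 0"

definition owl_gap :: "nat \<Rightarrow> (nat \<Rightarrow> real) \<Rightarrow> real" where
  "owl_gap p w = Min {w l - w (l + 1) | l. l + 1 < p}"

definition lad_owl_obj :: "nat \<Rightarrow> nat \<Rightarrow> (nat \<Rightarrow> nat \<Rightarrow> real) \<Rightarrow> (nat \<Rightarrow> real)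
    \<Rightarrow> (nat \<Rightarrow> real) \<Rightarrow> (nat \<Rightarrow> real) \<Rightarrow> real" where
  "lad_owl_obj n p A y w x = l1norm n (\<lambda>r. matvec p A x r - y r) + owl p w x"

end

theory Submission
  imports Defs "HOL-Combinatorics.List_Permutation"
begin

text \<open>If \<open>|x\<^sub>j| < |x\<^sub>i|\<close> at a minimiser, move a small amount \<open>\<epsilon>\<close> of magnitude from
  coordinate \<open>i\<close> to coordinate \<open>j\<close>, choosing \<open>\<epsilon>\<close> so small that the magnitude order of
  all coordinates is unchanged. Then one permutation sorts both points, so the OWL
  penalty drops by at least \<open>\<epsilon>(w\<^sub>a - w\<^sub>b) \<ge> \<epsilon>\<Delta>\<close>, where \<open>a < b\<close> are the ranks of \<open>i\<close> and
  \<open>j\<close>; the residual changes by \<open>\<epsilon>(sign(x\<^sub>i)a\<^sub>i - sign(x\<^sub>j)a\<^sub>j)\<close>, whose \<open>\<ell>\<^sub>1\<close> norm is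
  smaller than \<open>\<epsilon>\<Delta>\<close>. So the objective strictly decreases.\<close>

definition sorts_by_magnitude :: "nat \<Rightarrow> (nat \<Rightarrow> real) \<Rightarrow> (nat \<Rightarrow> nat) \<Rightarrow> bool" where
  "sorts_by_magnitude p x \<sigma> \<longleftrightarrow> bij_betw \<sigma> {..<p} {..<p} \<and>
     (\<forall>a b. a \<le> b \<longrightarrow> b < p \<longrightarrow> \<bar>x (\<sigma> b)\<bar> \<le> \<bar>x (\<sigma> a)\<bar>)"

lemma sorted_mag_sorts_by_magnitude:
  assumes "sorts_by_magnitude p x \<sigma>" and "k < p"
  shows "sorted_mag p x k = \<bar>x (\<sigma> k)\<bar>"
proof -
  define L where "L = map (\<lambda>k. \<bar>x k\<bar>) [0..<p]"
  define ys where "ys = map (\<lambda>k. \<bar>x (\<sigma> k)\<bar>) [0..<p]"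
  have inj: "inj_on \<sigma> {..<p}" and im: "\<sigma> ` {..<p} = {..<p}"
    using assms(1) by (auto simp: sorts_by_magnitude_def bij_betw_def)
  have "mset ys = image_mset (\<lambda>k. \<bar>x k\<bar>) (image_mset \<sigma> (mset_set {..<p}))"
    by (simp add: ys_def atLeast0LessThan image_mset.compositionality o_def)
  also have "\<dots> = mset L"
    using image_mset_mset_set[OF inj] im by (simp add: L_def atLeast0LessThan)
  finally have "mset (rev ys) = mset L" by simp
  moreover have "sorted (rev ys)"
    using assms(1) unfolding sorted_iff_nth_mono
    by (auto simp: sorts_by_magnitude_def ys_def rev_nth)
  ultimately have "sort L = rev ys" by (rule properties_for_sort)
  then show ?thesis using assms(2) by (simp add: sorted_mag_def L_def[symmetric] ys_def)
qed

lemma ex_sorts_by_magnitude: "\<exists>\<sigma>. sorts_by_magnitude p x \<sigma>"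
proof -
  define L where "L = map (\<lambda>k. \<bar>x k\<bar>) [0..<p]"
  have "mset (rev (sort L)) = mset L" by simp
  from permutation_Ex_bij[OF this] obtain f where
    f: "bij_betw f {..<p} {..<p}" "\<forall>i<p. rev (sort L) ! i = L ! (f i)"
    by (auto simp: L_def)
  have f_less: "f i < p" if "i < p" for i using f(1) that by (auto simp: bij_betw_def)
  have "\<bar>x (f b)\<bar> \<le> \<bar>x (f a)\<bar>" if "a \<le> b" "b < p" for a b
  proof -
    have "rev (sort L) ! b \<le> rev (sort L) ! a"
      using sorted_sort[of L] that unfolding sorted_iff_nth_mono by (auto simp: rev_nth L_def)
    then show ?thesis using f(2) that f_less[of a] f_less[of b] by (simp add: L_def)
  qed
  then show ?thesis using f(1) by (auto simp: sorts_by_magnitude_def)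
qed

lemma owl_sorts_by_magnitude:
  assumes "sorts_by_magnitude p x \<sigma>"
  shows "owl p w x = (\<Sum>k<p. w k * \<bar>x (\<sigma> k)\<bar>)"
  unfolding owl_def using sorted_mag_sorts_by_magnitude[OF assms] by simp

lemma sorts_by_magnitude_transfer:
  assumes "sorts_by_magnitude p x' \<sigma>"
    and "\<And>u v. u < p \<Longrightarrow> v < p \<Longrightarrow> \<bar>x u\<bar> < \<bar>x v\<bar> \<Longrightarrow> \<bar>x' u\<bar> < \<bar>x' v\<bar>"
  shows "sorts_by_magnitude p x \<sigma>"
proof -
  have "\<sigma> k < p" if "k < p" for k
    using assms(1) that by (auto simp: sorts_by_magnitude_def bij_betw_def)
  then show ?thesis
    using assms unfolding sorts_by_magnitude_def by (meson le_less_trans not_le)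
qed

lemma ex_pos_le_diff_lessThan:
  fixes f :: "nat \<Rightarrow> real"
  shows "\<exists>\<delta>>0. \<forall>u v. u < p \<longrightarrow> v < p \<longrightarrow> f u < f v \<longrightarrow> \<delta> \<le> f v - f u"
proof -
  define D where "D = {f v - f u | u v. u < p \<and> v < p \<and> f u < f v}"
  have "D \<subseteq> (\<lambda>(u, v). f v - f u) ` ({..<p} \<times> {..<p})" by (auto simp: D_def)
  then have "finite D" by (rule finite_subset) auto
  show ?thesis
  proof (cases "D = {}")
    case True
    then show ?thesis by (intro exI[of _ 1]) (auto simp: D_def)
  next
    case False
    have "Min D > 0" using \<open>finite D\<close> False by (subst Min_gr_iff) (auto simp: D_def)
    moreover have "Min D \<le> f v - f u" if "u < p" "v < p" "f u < f v" for u v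
      using \<open>finite D\<close> that by (intro Min_le) (auto simp: D_def)
    ultimately show ?thesis by blast
  qed
qed

lemma matvec_fun_upd:
  assumes "k < p"
  shows "matvec p A (x(k := c)) r = matvec p A x r + A r k * (c - x k)"
proof -
  have "matvec p A (x(k := c)) r = (\<Sum>l<p. A r l * x l + (if l = k then A r k * (c - x k) else 0))"
    unfolding matvec_def by (intro sum.cong refl) (simp add: algebra_simps)
  also have "\<dots> = matvec p A x r + A r k * (c - x k)"
    using assms by (simp add: sum.distrib matvec_def)
  finally show ?thesis .
qed

lemma l1norm_diff_scaled_le:
  assumes "0 \<le> \<epsilon>"
  shows "l1norm n (\<lambda>r. u r - \<epsilon> * d r) \<le> l1norm n u + \<epsilon> * l1norm n d"
proof -
  have "l1norm n (\<lambda>r. u r - \<epsilon> * d r) \<le> (\<Sum>r<n. \<bar>u r\<bar> + \<epsilon> * \<bar>d r\<bar>)"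
    unfolding l1norm_def using assms
    by (intro sum_mono) (metis abs_mult abs_of_nonneg abs_triangle_ineq4)
  then show ?thesis by (simp add: l1norm_def sum.distrib sum_distrib_left)
qed

lemma l1norm_minus_commute: "l1norm n (\<lambda>r. u r - v r) = l1norm n (\<lambda>r. v r - u r)"
  unfolding l1norm_def by (simp add: abs_minus_commute)

lemma owl_weight_antimono:
  assumes "owl_weight p w" and "a \<le> b" and "b < p"
  shows "w b \<le> w a"
  using assms by (auto simp: owl_weight_def)

lemma owl_weight_nonneg:
  assumes "owl_weight p w" and "b < p"
  shows "0 \<le> w b"
proof -
  have "w (p - 1) \<le> w b" using owl_weight_antimono[OF assms(1), of b "p - 1"] assms(2) by simp
  then show ?thesis using assms(1) by (simp add: owl_weight_def)
qed

lemma owl_gap_le_weight_diff: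
  assumes "owl_weight p w" and "a < b" and "b < p"
  shows "owl_gap p w \<le> w a - w b"
proof -
  have "{w l - w (l + 1) | l. l + 1 < p} = (\<lambda>l. w l - w (l + 1)) ` {..<p - 1}" by auto
  then have "owl_gap p w \<le> w a - w (a + 1)"
    unfolding owl_gap_def using assms(2,3) by (intro Min_le) auto
  moreover have "w b \<le> w (a + 1)" using owl_weight_antimono[OF assms(1)] assms(2,3) by simp
  ultimately show ?thesis by simp
qed

lemma owl_transfer_le:
  assumes W: "owl_weight p w" and ip: "i < p" and jp: "j < p"
    and sx: "sorts_by_magnitude p x \<sigma>" and sx': "sorts_by_magnitude p x' \<sigma>"
    and others: "\<And>k. k \<noteq> i \<Longrightarrow> k \<noteq> j \<Longrightarrow> \<bar>x' k\<bar> = \<bar>x k\<bar>"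
    and order: "\<bar>x' j\<bar> < \<bar>x' i\<bar>"
    and at_i: "\<bar>x' i\<bar> = \<bar>x i\<bar> - \<epsilon>" and at_j: "\<bar>x' j\<bar> \<le> \<bar>x j\<bar> + \<epsilon>" and "0 \<le> \<epsilon>"
  shows "owl p w x' + \<epsilon> * owl_gap p w \<le> owl p w x"
proof -
  have bij: "bij_betw \<sigma> {..<p} {..<p}" using sx by (simp add: sorts_by_magnitude_def)
  obtain a where a: "a < p" "\<sigma> a = i" using bij ip by (metis bij_betw_iff_bijections lessThan_iff)
  obtain b where b: "b < p" "\<sigma> b = j" using bij jp by (metis bij_betw_iff_bijections lessThan_iff)
  have "a < b"
  proof (rule ccontr)
    assume "\<not> a < b"
    then have "\<bar>x' (\<sigma> a)\<bar> \<le> \<bar>x' (\<sigma> b)\<bar>"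
      using sx' a(1) unfolding sorts_by_magnitude_def by (meson not_less)
    then show False using order a b by simp
  qed
  have "owl p w x - owl p w x' = (\<Sum>k<p. w k * (\<bar>x (\<sigma> k)\<bar> - \<bar>x' (\<sigma> k)\<bar>))"
    unfolding owl_sorts_by_magnitude[OF sx] owl_sorts_by_magnitude[OF sx']
    by (simp add: sum_subtractf algebra_simps)
  also have "\<dots> = (\<Sum>k\<in>{a, b}. w k * (\<bar>x (\<sigma> k)\<bar> - \<bar>x' (\<sigma> k)\<bar>))"
  proof (rule sum.mono_neutral_right)
    have "\<sigma> k \<noteq> i" "\<sigma> k \<noteq> j" if "k \<in> {..<p} - {a, b}" for k
      using that a b inj_onD[of \<sigma> "{..<p}"] bij by (auto simp: bij_betw_def)
    then show "\<forall>k\<in>{..<p} - {a, b}. w k * (\<bar>x (\<sigma> k)\<bar> - \<bar>x' (\<sigma> k)\<bar>) = 0"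
      using others by simp
  qed (use a b in auto)
  also have "\<dots> = w a * \<epsilon> + w b * (\<bar>x j\<bar> - \<bar>x' j\<bar>)"
    using \<open>a < b\<close> a b at_i by simp
  also have "\<dots> \<ge> w a * \<epsilon> - w b * \<epsilon>"
    using mult_left_mono[of "- \<epsilon>" "\<bar>x j\<bar> - \<bar>x' j\<bar>" "w b"] at_j owl_weight_nonneg[OF W b(1)]
    by simp
  finally have "\<epsilon> * (w a - w b) \<le> owl p w x - owl p w x'" by (simp add: algebra_simps)
  moreover have "\<epsilon> * owl_gap p w \<le> \<epsilon> * (w a - w b)"
    using owl_gap_le_weight_diff[OF W \<open>a < b\<close> b(1)] \<open>0 \<le> \<epsilon>\<close> by (rule mult_left_mono)
  ultimately show ?thesis by simp
qed

lemma owl_shift_magnitude_le: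
  fixes x :: "nat \<Rightarrow> real"
  assumes W: "owl_weight p w" and ip: "i < p" and jp: "j < p" and less: "\<bar>x j\<bar> < \<bar>x i\<bar>"
  shows "\<exists>\<epsilon>>0. owl p w (x(i := x i - \<epsilon> * sgn (x i), j := x j + \<epsilon> * sgn (x j)))
           + \<epsilon> * owl_gap p w \<le> owl p w x"
proof -
  have "i \<noteq> j" using less by auto
  obtain \<delta> where "\<delta> > 0"
    and \<delta>: "\<And>u v. u < p \<Longrightarrow> v < p \<Longrightarrow> \<bar>x u\<bar> < \<bar>x v\<bar> \<Longrightarrow> \<delta> \<le> \<bar>x v\<bar> - \<bar>x u\<bar>"
    using ex_pos_le_diff_lessThan[of p "\<lambda>k. \<bar>x k\<bar>"] by blast
  define \<epsilon> where "\<epsilon> = \<delta> / 4"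
  have "\<epsilon> > 0" and "4 * \<epsilon> \<le> \<bar>x i\<bar> - \<bar>x j\<bar>"
    using \<open>\<delta> > 0\<close> \<delta>[OF jp ip less] by (simp_all add: \<epsilon>_def)
  define x' where "x' = x(i := x i - \<epsilon> * sgn (x i), j := x j + \<epsilon> * sgn (x j))"
  have at_i: "\<bar>x' i\<bar> = \<bar>x i\<bar> - \<epsilon>"
    using \<open>i \<noteq> j\<close> \<open>\<epsilon> > 0\<close> \<open>4 * \<epsilon> \<le> \<bar>x i\<bar> - \<bar>x j\<bar>\<close>
    by (cases "x i > 0") (auto simp: x'_def)
  have at_j: "\<bar>x' j\<bar> = \<bar>x j\<bar> + \<epsilon> * \<bar>sgn (x j)\<bar>"
    using \<open>\<epsilon> > 0\<close> by (cases "x j" "0::real" rule: linorder_cases) (auto simp: x'_def)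
  have at_j_le: "\<bar>x' j\<bar> \<le> \<bar>x j\<bar> + \<epsilon>"
    unfolding at_j using \<open>\<epsilon> > 0\<close> by (simp add: abs_sgn_eq)
  have others: "\<bar>x' k\<bar> = \<bar>x k\<bar>" if "k \<noteq> i" "k \<noteq> j" for k
    using that by (simp add: x'_def)
  have close: "\<bar>\<bar>x' k\<bar> - \<bar>x k\<bar>\<bar> \<le> \<epsilon>" for k
    using at_i at_j_le at_j others \<open>\<epsilon> > 0\<close> by (cases "k = i"; cases "k = j") auto
  have preserved: "\<bar>x' u\<bar> < \<bar>x' v\<bar>" if "u < p" "v < p" "\<bar>x u\<bar> < \<bar>x v\<bar>" for u v
    using \<delta>[OF that] close[of u] close[of v] \<open>\<epsilon> > 0\<close> unfolding \<epsilon>_def by linarith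
  obtain \<sigma> where sx': "sorts_by_magnitude p x' \<sigma>" using ex_sorts_by_magnitude by blast
  have sx: "sorts_by_magnitude p x \<sigma>" using sorts_by_magnitude_transfer[OF sx' preserved] .
  have "\<bar>x' j\<bar> < \<bar>x' i\<bar>"
    using at_i at_j_le \<open>\<epsilon> > 0\<close> \<open>4 * \<epsilon> \<le> \<bar>x i\<bar> - \<bar>x j\<bar>\<close> by linarith
  then have "owl p w x' + \<epsilon> * owl_gap p w \<le> owl p w x"
    using owl_transfer_le[OF W ip jp sx sx' others _ at_i at_j_le] \<open>\<epsilon> > 0\<close> by simp
  then show ?thesis using \<open>\<epsilon> > 0\<close> unfolding x'_def by blast
qed

lemma matvec_shift:
  assumes "i < p" and "j < p" and "i \<noteq> j"
  shows "matvec p A (x(i := x i - \<epsilon> * s, j := x j + \<epsilon> * t)) r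
           = matvec p A x r - \<epsilon> * (s * A r i - t * A r j)"
  using assms by (simp add: matvec_fun_upd algebra_simps)

lemma lad_owl_minimizer_not_less_abs:
  fixes x :: "nat \<Rightarrow> real"
  assumes W: "owl_weight p w"
    and opt: "\<forall>z. lad_owl_obj n p A y w x \<le> lad_owl_obj n p A y w z"
    and ip: "i < p" and jp: "j < p"
    and small: "l1norm n (\<lambda>r. sgn (x i) * A r i - sgn (x j) * A r j) < owl_gap p w"
  shows "\<not> \<bar>x j\<bar> < \<bar>x i\<bar>"
proof
  assume less: "\<bar>x j\<bar> < \<bar>x i\<bar>"
  then have "i \<noteq> j" by auto
  define x' where "x' \<epsilon> = x(i := x i - \<epsilon> * sgn (x i), j := x j + \<epsilon> * sgn (x j))" for \<epsilon>
  obtain \<epsilon> :: real where "\<epsilon> > 0" and owl_gain: "owl p w (x' \<epsilon>) + \<epsilon> * owl_gap p w \<le> owl p w x"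
    using owl_shift_magnitude_le[OF W ip jp less] unfolding x'_def by blast
  define d where "d = (\<lambda>r. sgn (x i) * A r i - sgn (x j) * A r j)"
  have "(\<lambda>r. matvec p A (x' \<epsilon>) r - y r) = (\<lambda>r. (matvec p A x r - y r) - \<epsilon> * d r)"
    unfolding x'_def d_def matvec_shift[OF ip jp \<open>i \<noteq> j\<close>] by (simp add: algebra_simps)
  then have "l1norm n (\<lambda>r. matvec p A (x' \<epsilon>) r - y r)
      \<le> l1norm n (\<lambda>r. matvec p A x r - y r) + \<epsilon> * l1norm n d"
    using l1norm_diff_scaled_le[of \<epsilon> n "\<lambda>r. matvec p A x r - y r" d] \<open>\<epsilon> > 0\<close> by simp
  moreover have "\<epsilon> * l1norm n d < \<epsilon> * owl_gap p w"
    using small \<open>\<epsilon> > 0\<close> by (simp add: d_def)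
  ultimately have "lad_owl_obj n p A y w (x' \<epsilon>) < lad_owl_obj n p A y w x"
    using owl_gain by (simp add: lad_owl_obj_def)
  then show False using opt by (meson not_le)
qed

theorem theorem3:
  fixes n p :: nat and A :: "nat \<Rightarrow> nat \<Rightarrow> real" and y w xhat :: "nat \<Rightarrow> real"
  assumes "owl_weight p w"
    and "\<forall>x. lad_owl_obj n p A y w xhat \<le> lad_owl_obj n p A y w x"
    and "i < p" and "j < p"
    and "l1norm n (\<lambda>r. sgn (xhat i) * A r i - sgn (xhat j) * A r j) < owl_gap p w"
  shows "\<bar>xhat i\<bar> = \<bar>xhat j\<bar>"
proof -
  have swapped: "l1norm n (\<lambda>r. sgn (xhat j) * A r j - sgn (xhat i) * A r i) < owl_gap p w"
    unfolding l1norm_minus_commute[of n "\<lambda>r. sgn (xhat j) * A r j"] by (rule assms(5))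
  have "\<not> \<bar>xhat j\<bar> < \<bar>xhat i\<bar>"
    using lad_owl_minimizer_not_less_abs[OF assms] .
  moreover have "\<not> \<bar>xhat i\<bar> < \<bar>xhat j\<bar>"
    using lad_owl_minimizer_not_less_abs[OF assms(1,2,4,3) swapped] .
  ultimately show ?thesis by linarith
qed

end
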